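(* Let $X\neq\emptyset$ be a set and let $\Phi$ be a nonempty set of bounded functions $X\to\mathbb{R}$. Let $\tau_{D_X}$ be the topology on $X$ induced by the extended pseudo-metric $D_X$, and let $\tau_{\mathrm{in}}$ be the initial topology on $X$ with respect to $\Phi$ (the coarsest topology making every $\varphi\in\Phi$ continuous, $\mathbb{R}$ carrying the Euclidean topology). Then $\tau_{D_X}$ is finer than $\tau_{\mathrm{in}}$. Moreover, if $\Phi$ is totally bounded with respect to $D_\Phi$, then $\tau_{D_X}=\tau_{\mathrm{in}}$.
   Context: $D_\Phi(\varphi_1,\varphi_2):=\|\varphi_1-\varphi_2\|_\infty=\sup_{x\in X}|\varphi_1(x)-\varphi_2(x)|$ for $\varphi_1,\varphi_2\in\Phi$. The extended pseudo-metric $D_X$ on $X$ is $D_X(x_1,x_2):=\sup_{\varphi\in\Phi}|\varphi(x_1)-\varphi(x_2)|$; its topology $\tau_{D_X}$ has as a base the balls $B_X(x,\varepsilon)=\{x'\in X: D_X(x,x')<\varepsilon\}$, $x\in X$, $\varepsilon>0$. *)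

theory Defs
  imports "HOL-Analysis.Analysis"
begin

definition D_Phi :: "'a set \<Rightarrow> ('a \<Rightarrow> real) \<Rightarrow> ('a \<Rightarrow> real) \<Rightarrow> real" where
  "D_Phi X f g = (SUP x\<in>X. \<bar>f x - g x\<bar>)"

definition D_X :: "('a \<Rightarrow> real) set \<Rightarrow> 'a \<Rightarrow> 'a \<Rightarrow> ereal" where
  "D_X Phi x y = (SUP \<phi>\<in>Phi. ereal \<bar>\<phi> x - \<phi> y\<bar>)"

definition ball_X :: "'a set \<Rightarrow> ('a \<Rightarrow> real) set \<Rightarrow> 'a \<Rightarrow> real \<Rightarrow> 'a set" where
  "ball_X X Phi x e = {x' \<in> X. D_X Phi x x' < ereal e}"

definition tau_DX :: "'a set \<Rightarrow> ('a \<Rightarrow> real) set \<Rightarrow> 'a topology" where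
  "tau_DX X Phi = topology_generated_by {ball_X X Phi x e | x e. x \<in> X \<and> e > 0}"

definition tau_in :: "'a set \<Rightarrow> ('a \<Rightarrow> real) set \<Rightarrow> 'a topology" where
  "tau_in X Phi = topology_generated_by {X \<inter> \<phi> -` U | \<phi> U. \<phi> \<in> Phi \<and> open U}"

definition totally_bounded_DPhi :: "'a set \<Rightarrow> ('a \<Rightarrow> real) set \<Rightarrow> bool" where
  "totally_bounded_DPhi X Phi \<longleftrightarrow>
     (\<forall>e>0. \<exists>F. finite F \<and> F \<subseteq> Phi \<and> Phi \<subseteq> (\<Union>f\<in>F. {g \<in> Phi. D_Phi X f g < e}))"

end

theory Submission
  imports Defs
begin

text \<open>
  Every basic open set \<open>X \<inter> \<phi> -` U\<close> of the initial topology contains a \<open>D_X\<close>-ball around each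
  of its points, since \<open>\<bar>\<phi> x - \<phi> y\<bar> \<le> D_X x y\<close>; so \<open>\<tau>\<^sub>D\<^sub>X\<close> is finer.
  Conversely, if \<open>\<Phi>\<close> is totally bounded for the sup-distance, pick a finite \<open>r\<close>-net \<open>F\<close>
  of \<open>\<Phi>\<close>. The finitely many conditions \<open>\<bar>f x - f y\<bar> < r\<close>, \<open>f \<in> F\<close>, define an initially open
  neighbourhood of \<open>x\<close> on which every \<open>\<phi> \<in> \<Phi>\<close> varies by less than \<open>3 r\<close>, by the triangle
  inequality through an \<open>f \<in> F\<close> uniformly \<open>r\<close>-close to \<open>\<phi>\<close>. Hence \<open>\<Phi>\<close> is
  equicontinuous for the initial topology, and every \<open>D_X\<close>-ball is initially open.
\<close>

lemma openin_topology_generated_by_coarsest: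
  assumes "\<And>S. S \<in> \<S> \<Longrightarrow> openin T S" and "openin (topology_generated_by \<S>) U"
  shows "openin T U"
  using generate_topology_on_coarsest[of "openin T" \<S> U] assms
  by (auto simp: openin_topology_generated_by_iff)

lemma abs_diff_le_D_X:
  assumes "\<phi> \<in> Phi"
  shows "ereal \<bar>\<phi> x - \<phi> y\<bar> \<le> D_X Phi x y"
  unfolding D_X_def using assms by (auto intro: SUP_upper)

lemma D_X_le_ereal:
  assumes "\<And>\<phi>. \<phi> \<in> Phi \<Longrightarrow> \<bar>\<phi> x - \<phi> y\<bar> \<le> c"
  shows "D_X Phi x y \<le> ereal c"
  unfolding D_X_def using assms by (auto intro!: SUP_least)

lemma D_X_refl:
  assumes "Phi \<noteq> {}"
  shows "D_X Phi x x = 0"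
  unfolding D_X_def using assms by simp

lemma abs_diff_le_D_Phi:
  assumes "bounded (f ` X)" and "bounded (g ` X)" and "z \<in> X"
  shows "\<bar>f z - g z\<bar> \<le> D_Phi X f g"
proof -
  obtain B1 where B1: "\<forall>x\<in>X. \<bar>f x\<bar> \<le> B1" using assms(1) unfolding bounded_iff by auto
  obtain B2 where B2: "\<forall>x\<in>X. \<bar>g x\<bar> \<le> B2" using assms(2) unfolding bounded_iff by auto
  have "bdd_above ((\<lambda>x. \<bar>f x - g x\<bar>) ` X)"
  proof (rule bdd_aboveI2[where M = "B1 + B2"])
    fix x assume "x \<in> X"
    with B1 B2 have "\<bar>f x\<bar> \<le> B1" "\<bar>g x\<bar> \<le> B2" by auto
    then show "\<bar>f x - g x\<bar> \<le> B1 + B2" by arith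
  qed
  then show ?thesis unfolding D_Phi_def by (rule cSUP_upper[OF assms(3)])
qed

lemma center_in_ball_X:
  assumes "x \<in> X" and "e > 0" and "Phi \<noteq> {}"
  shows "x \<in> ball_X X Phi x e"
  using assms D_X_refl[of Phi x] unfolding ball_X_def by simp

lemma openin_tau_DX_ball_X:
  assumes "x \<in> X" and "e > 0"
  shows "openin (tau_DX X Phi) (ball_X X Phi x e)"
  unfolding tau_DX_def by (rule topology_generated_by_Basis) (use assms in blast)

lemma openin_tau_in_vimage:
  assumes "\<phi> \<in> Phi" and "open U"
  shows "openin (tau_in X Phi) (X \<inter> \<phi> -` U)"
  unfolding tau_in_def by (rule topology_generated_by_Basis) (use assms in blast)

lemma topspace_tau_in:
  assumes "Phi \<noteq> {}"
  shows "topspace (tau_in X Phi) = X"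
  using assms by (auto simp: tau_in_def)

lemma openin_tau_DX_vimage:
  assumes "Phi \<noteq> {}" and "\<phi> \<in> Phi" and "open U"
  shows "openin (tau_DX X Phi) (X \<inter> \<phi> -` U)"
proof (rule openin_subopen[THEN iffD2], intro ballI)
  fix x assume x: "x \<in> X \<inter> \<phi> -` U"
  then have "\<phi> x \<in> U" by simp
  then obtain e where e: "e > 0" "ball (\<phi> x) e \<subseteq> U"
    using assms(3) open_contains_ball by blast
  have "ball_X X Phi x e \<subseteq> X \<inter> \<phi> -` U"
  proof
    fix y assume y: "y \<in> ball_X X Phi x e"
    then have "D_X Phi x y < ereal e" unfolding ball_X_def by simp
    then have "ereal \<bar>\<phi> x - \<phi> y\<bar> < ereal e"
      by (rule order_le_less_trans[OF abs_diff_le_D_X[OF assms(2)]])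
    then have "\<phi> y \<in> ball (\<phi> x) e" by (simp add: dist_real_def)
    with y e show "y \<in> X \<inter> \<phi> -` U" unfolding ball_X_def by auto
  qed
  moreover have "x \<in> X" using x by simp
  ultimately show "\<exists>T. openin (tau_DX X Phi) T \<and> x \<in> T \<and> T \<subseteq> X \<inter> \<phi> -` U"
    using openin_tau_DX_ball_X center_in_ball_X e(1) assms(1) by metis
qed

lemma tau_DX_finer_than_tau_in:
  assumes "Phi \<noteq> {}" and "openin (tau_in X Phi) U"
  shows "openin (tau_DX X Phi) U"
  using assms(2) unfolding tau_in_def
  by (rule openin_topology_generated_by_coarsest[rotated])
    (auto intro: openin_tau_DX_vimage[OF assms(1)])

lemma totally_bounded_DPhi_equicontinuous:
  assumes "totally_bounded_DPhi X Phi" and "Phi \<noteq> {}"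
    and "\<forall>\<phi>\<in>Phi. bounded (\<phi> ` X)"
    and "x \<in> X" and "r > 0"
  obtains V where "openin (tau_in X Phi) V" and "x \<in> V"
    and "\<And>y \<phi>. y \<in> V \<Longrightarrow> \<phi> \<in> Phi \<Longrightarrow> \<bar>\<phi> x - \<phi> y\<bar> < r"
proof -
  have "\<exists>F. finite F \<and> F \<subseteq> Phi \<and> Phi \<subseteq> (\<Union>f\<in>F. {g \<in> Phi. D_Phi X f g < r / 3})"
    by (rule assms(1)[unfolded totally_bounded_DPhi_def, rule_format]) (use assms(5) in simp)
  then obtain F where F: "finite F" "F \<subseteq> Phi"
    and net: "Phi \<subseteq> (\<Union>f\<in>F. {g \<in> Phi. D_Phi X f g < r / 3})"
    by blast
  define V where "V = X \<inter> (\<Inter>f\<in>F. f -` ball (f x) (r / 3))"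
  have "openin (tau_in X Phi) ((\<Inter>f\<in>F. X \<inter> f -` ball (f x) (r / 3)) \<inter> topspace (tau_in X Phi))"
    by (rule openin_INT[OF F(1)], rule openin_tau_in_vimage) (use F(2) in auto)
  moreover have "(\<Inter>f\<in>F. X \<inter> f -` ball (f x) (r / 3)) \<inter> topspace (tau_in X Phi) = V"
    unfolding V_def topspace_tau_in[OF assms(2)] by blast
  ultimately have "openin (tau_in X Phi) V" by simp
  moreover have "x \<in> V"
    unfolding V_def using assms(4,5) by simp
  moreover have "\<bar>\<phi> x - \<phi> y\<bar> < r" if y: "y \<in> V" and \<phi>: "\<phi> \<in> Phi" for y \<phi>
  proof -
    obtain f where f: "f \<in> F" "D_Phi X f \<phi> < r / 3" using net \<phi> by auto
    have "y \<in> X" using y by (simp add: V_def)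
    have bounded: "bounded (f ` X)" "bounded (\<phi> ` X)" using f F \<phi> assms(3) by auto
    have "\<bar>f x - \<phi> x\<bar> < r / 3"
      using abs_diff_le_D_Phi[OF bounded assms(4)] f by linarith
    moreover have "\<bar>f y - \<phi> y\<bar> < r / 3"
      using abs_diff_le_D_Phi[OF bounded \<open>y \<in> X\<close>] f by linarith
    moreover have "\<bar>f x - f y\<bar> < r / 3"
      using y f unfolding V_def by (auto simp: dist_real_def)
    ultimately show ?thesis by linarith
  qed
  ultimately show ?thesis using that by blast
qed

lemma openin_tau_in_ball_X:
  assumes "totally_bounded_DPhi X Phi" and "Phi \<noteq> {}"
    and "\<forall>\<phi>\<in>Phi. bounded (\<phi> ` X)"
  shows "openin (tau_in X Phi) (ball_X X Phi x0 e)"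
proof (rule openin_subopen[THEN iffD2], intro ballI)
  fix x assume "x \<in> ball_X X Phi x0 e"
  then have "x \<in> X" and "D_X Phi x0 x < ereal e" unfolding ball_X_def by simp_all
  then obtain d where d: "D_X Phi x0 x < ereal d" "d < e"
    using ereal_dense2[OF \<open>D_X Phi x0 x < ereal e\<close>] by auto
  obtain V where V: "openin (tau_in X Phi) V" "x \<in> V"
    and close: "\<And>y \<phi>. y \<in> V \<Longrightarrow> \<phi> \<in> Phi \<Longrightarrow> \<bar>\<phi> x - \<phi> y\<bar> < (e - d) / 2"
    using totally_bounded_DPhi_equicontinuous[OF assms \<open>x \<in> X\<close>, of "(e - d) / 2"] d(2) by auto
  have "V \<subseteq> ball_X X Phi x0 e"
  proof
    fix y assume y: "y \<in> V"
    have "\<bar>\<phi> x0 - \<phi> y\<bar> \<le> (d + e) / 2" if "\<phi> \<in> Phi" for \<phi>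
    proof -
      have "ereal \<bar>\<phi> x0 - \<phi> x\<bar> < ereal d"
        using abs_diff_le_D_X[OF that] d(1) by (rule order_le_less_trans)
      then have "\<bar>\<phi> x0 - \<phi> x\<bar> < d" by simp
      moreover have "\<bar>\<phi> x0 - \<phi> y\<bar> \<le> \<bar>\<phi> x0 - \<phi> x\<bar> + \<bar>\<phi> x - \<phi> y\<bar>"
        using abs_triangle_ineq[of "\<phi> x0 - \<phi> x" "\<phi> x - \<phi> y"] by simp
      ultimately show ?thesis using close[OF y that] by (simp add: field_simps)
    qed
    then have "D_X Phi x0 y \<le> ereal ((d + e) / 2)" by (rule D_X_le_ereal)
    also have "\<dots> < ereal e" using d(2) by simp
    finally show "y \<in> ball_X X Phi x0 e"
      using y V(1) assms(2) openin_subset[of "tau_in X Phi" V] unfolding ball_X_def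
      by (auto simp: topspace_tau_in)
  qed
  with V show "\<exists>T. openin (tau_in X Phi) T \<and> x \<in> T \<and> T \<subseteq> ball_X X Phi x0 e" by blast
qed

theorem mainTheorem1:
  fixes X :: "'a set" and Phi :: "('a \<Rightarrow> real) set"
  assumes "X \<noteq> {}" and "Phi \<noteq> {}"
    and "\<forall>\<phi>\<in>Phi. bounded (\<phi> ` X)"
  shows "(\<forall>U. openin (tau_in X Phi) U \<longrightarrow> openin (tau_DX X Phi) U)
       \<and> (totally_bounded_DPhi X Phi \<longrightarrow> tau_DX X Phi = tau_in X Phi)"
proof (intro conjI allI impI)
  show "openin (tau_DX X Phi) U" if "openin (tau_in X Phi) U" for U
    using tau_DX_finer_than_tau_in[OF assms(2) that] .
  assume totally_bounded: "totally_bounded_DPhi X Phi"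
  have "openin (tau_in X Phi) U" if "openin (tau_DX X Phi) U" for U
    using that unfolding tau_DX_def
    by (rule openin_topology_generated_by_coarsest[rotated])
      (auto intro: openin_tau_in_ball_X[OF totally_bounded assms(2,3)])
  with tau_DX_finer_than_tau_in[OF assms(2)] show "tau_DX X Phi = tau_in X Phi"
    by (auto simp: topology_eq)
qed

end
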